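(* Let $M$ be the spacetime with metric $ds^2=-b^2(r)dt^2+f_1^2(r)dr^2+f_2^2(r)(d\theta^2+\sin^2\theta\,d\phi^2)$ ($b,f_1,f_2$ smooth and positive), with $u_k$, $\chi_k$ as in the context. Let $\kappa_1,\kappa_2,\kappa_3$ be constants and $$K_{kl}=(\kappa_2f_2^2-2\kappa_3b^2)u_ku_l+(\kappa_1+2\kappa_2f_2^2+\kappa_3b^2)g_{kl}-\kappa_2f_2^2\,\chi_k\chi_l,$$ and let $T_{kl}=(\mu+p_\perp)u_ku_l+p_\perp g_{kl}+(p_r-p_\perp)\chi_k\chi_l$ with functions $\mu(r),p_r(r),p_\perp(r)$, and $P=\tfrac13(p_r+2p_\perp)$. Then the conformal Killing gravity field equations $R_{kl}-\tfrac12Rg_{kl}=T_{kl}+K_{kl}$ are equivalent to the three scalar equations $$\tfrac12R^\star=\mu-3\kappa_3b^2-\kappa_2f_2^2-\kappa_1,\qquad D=\tfrac32P+\tfrac12\mu+2\kappa_2f_2^2+\kappa_1,\qquad \Sigma=(p_r-p_\perp)-\kappa_2f_2^2,$$ where $R^\star$, $D$, $\Sigma$ are the functions of $r$ defined in the context.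
   Context: $u_k$ has components $u_0=-b$, $u_r=u_\theta=u_\phi=0$; $\chi_k$ has components $\chi_r=f_1$ and all others zero. $R_{kl}$ is the Ricci tensor of $g$ and $R$ its trace. Primes denote $d/dr$. Define $D=\dfrac{1}{bf_1^2}\left[b''-b'\left(\dfrac{f_1'}{f_1}-2\dfrac{f_2'}{f_2}\right)\right]$ (this is $\nabla_p\dot u^p$, where $\dot u_k=u^j\nabla_ju_k$), $\Sigma=-\dfrac{1}{bf_1^2}\left[b''-b'\left(\dfrac{f_1'}{f_1}+\dfrac{f_2'}{f_2}\right)\right]-\dfrac{1}{f_1^2}\left[\dfrac{f_1^2}{f_2^2}+\dfrac{f_2''}{f_2}-\left(\dfrac{f_2'}{f_2}\right)^2-\dfrac{f_1'f_2'}{f_1f_2}\right]$, $R^\star=\dfrac{2}{f_2^2}-\dfrac{2}{f_1^2}\left[2\dfrac{f_2''}{f_2}-2\dfrac{f_1'f_2'}{f_1f_2}+\left(\dfrac{f_2'}{f_2}\right)^2\right]$. *)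

theory Defs
  imports "HOL-Analysis.Analysis"
begin

text \<open>Points of the coordinate chart are functions nat \<Rightarrow> real, of which only
  the components 0,1,2,3 = t, r, theta, phi are used. Tensor indices range over 0..3.\<close>

definition smooth_on :: "real set \<Rightarrow> (real \<Rightarrow> real) \<Rightarrow> bool" where
  "smooth_on I f \<longleftrightarrow> (\<forall>n. \<forall>x\<in>I. ((deriv ^^ n) f) differentiable (at x))"

definition pd :: "nat \<Rightarrow> ((nat \<Rightarrow> real) \<Rightarrow> real) \<Rightarrow> (nat \<Rightarrow> real) \<Rightarrow> real" where
  "pd i F x = deriv (\<lambda>s. F (x(i := s))) (x i)"

type_synonym metric = "(nat \<Rightarrow> real) \<Rightarrow> nat \<Rightarrow> nat \<Rightarrow> real"

definition inv_metric :: "metric \<Rightarrow> (nat \<Rightarrow> real) \<Rightarrow> nat \<Rightarrow> nat \<Rightarrow> real" where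
  "inv_metric g x = (THE h. (\<forall>a<4. \<forall>c<4. (\<Sum>b<4. g x a b * h b c) = (if a = c then 1 else 0))
                         \<and> (\<forall>a b. (4 \<le> a \<or> 4 \<le> b) \<longrightarrow> h a b = 0))"

definition christoffel :: "metric \<Rightarrow> (nat \<Rightarrow> real) \<Rightarrow> nat \<Rightarrow> nat \<Rightarrow> nat \<Rightarrow> real" where
  "christoffel g x a b c = (1/2) * (\<Sum>d<4. inv_metric g x a d *
      (pd b (\<lambda>y. g y d c) x + pd c (\<lambda>y. g y d b) x - pd d (\<lambda>y. g y b c) x))"

text \<open>Ricci tensor R_{bc} = R^a_{bac}.\<close>
definition ricci :: "metric \<Rightarrow> (nat \<Rightarrow> real) \<Rightarrow> nat \<Rightarrow> nat \<Rightarrow> real" where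
  "ricci g x b c =
     (\<Sum>a<4. pd a (\<lambda>y. christoffel g y a b c) x)
   - (\<Sum>a<4. pd c (\<lambda>y. christoffel g y a a b) x)
   + (\<Sum>a<4. \<Sum>d<4. christoffel g x a a d * christoffel g x d b c
                     - christoffel g x a c d * christoffel g x d a b)"

definition scalar_curv :: "metric \<Rightarrow> (nat \<Rightarrow> real) \<Rightarrow> real" where
  "scalar_curv g x = (\<Sum>a<4. \<Sum>c<4. inv_metric g x a c * ricci g x a c)"

definition sss_metric :: "(real \<Rightarrow> real) \<Rightarrow> (real \<Rightarrow> real) \<Rightarrow> (real \<Rightarrow> real) \<Rightarrow> metric" where
  "sss_metric b f1 f2 x k l =
     (if k \<noteq> l then 0
      else if k = 0 then - ((b (x 1))^2)
      else if k = 1 then (f1 (x 1))^2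
      else if k = 2 then (f2 (x 1))^2
      else if k = 3 then (f2 (x 1))^2 * (sin (x 2))^2
      else 0)"

text \<open>Covariant components u_k (u_0 = -b) and chi_k (chi_1 = f1).\<close>
definition u_vec :: "(real \<Rightarrow> real) \<Rightarrow> (nat \<Rightarrow> real) \<Rightarrow> nat \<Rightarrow> real" where
  "u_vec b x k = (if k = 0 then - b (x 1) else 0)"

definition chi_vec :: "(real \<Rightarrow> real) \<Rightarrow> (nat \<Rightarrow> real) \<Rightarrow> nat \<Rightarrow> real" where
  "chi_vec f1 x k = (if k = 1 then f1 (x 1) else 0)"

definition D_fun :: "(real \<Rightarrow> real) \<Rightarrow> (real \<Rightarrow> real) \<Rightarrow> (real \<Rightarrow> real) \<Rightarrow> real \<Rightarrow> real" where
  "D_fun b f1 f2 r = 1 / (b r * (f1 r)^2) *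
     (deriv (deriv b) r - deriv b r * (deriv f1 r / f1 r - 2 * deriv f2 r / f2 r))"

definition Sigma_fun :: "(real \<Rightarrow> real) \<Rightarrow> (real \<Rightarrow> real) \<Rightarrow> (real \<Rightarrow> real) \<Rightarrow> real \<Rightarrow> real" where
  "Sigma_fun b f1 f2 r =
     - 1 / (b r * (f1 r)^2) * (deriv (deriv b) r - deriv b r * (deriv f1 r / f1 r + deriv f2 r / f2 r))
     - 1 / (f1 r)^2 * ((f1 r)^2 / (f2 r)^2 + deriv (deriv f2) r / f2 r - (deriv f2 r / f2 r)^2
                        - deriv f1 r * deriv f2 r / (f1 r * f2 r))"

definition Rstar_fun :: "(real \<Rightarrow> real) \<Rightarrow> (real \<Rightarrow> real) \<Rightarrow> real \<Rightarrow> real" where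
  "Rstar_fun f1 f2 r = 2 / (f2 r)^2 - 2 / (f1 r)^2 *
     (2 * deriv (deriv f2) r / f2 r - 2 * deriv f1 r * deriv f2 r / (f1 r * f2 r) + (deriv f2 r / f2 r)^2)"

end

(* The metric is diagonal, so both sides of the field equations are diagonal, and the
   phi-phi component is sin^2 theta times the theta-theta one. Dividing by g_kk leaves the
   three mixed equations G^k_k = T^k_k + K^k_k for k = t, r, theta. Computing the Christoffel
   symbols and the Ricci tensor in the chart gives R^t_t = -D, R* = D + R^r_r + 2 R^theta_theta
   and Sigma = R^r_r - R^theta_theta; in these terms the three mixed equations and the three
   stated scalar equations are invertible linear recombinations of each other. *)

theory Submission
  imports Defs
begin

lemma pd_eq_if_has_derivative:
  "((\<lambda>s. F (x(i := s))) has_real_derivative D) (at (x i)) \<Longrightarrow> pd i F x = D"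
  unfolding pd_def by (rule DERIV_imp_deriv)

lemma pd_eq_if_eventually:
  assumes "eventually (\<lambda>s. F (x(i := s)) = h s) (nhds (x i))"
    and "(h has_real_derivative D) (at (x i))"
  shows "pd i F x = D"
  unfolding pd_def using deriv_cong_ev[OF assms(1) refl] DERIV_imp_deriv[OF assms(2)] by simp

lemma pd_eq_0_if_const:
  assumes "\<And>s. F (x(i := s)) = c"
  shows "pd i F x = 0"
  by (rule pd_eq_if_eventually[where h = "\<lambda>_. c"]) (use assms in auto)

context
  fixes g :: metric and y :: "nat \<Rightarrow> real" and G :: "nat \<Rightarrow> real"
  assumes diagonal: "\<And>a c. g y a c = (if a = c then G a else 0)"
    and nonzero: "\<And>a. a < 4 \<Longrightarrow> G a \<noteq> 0"
begin

lemma inv_metric_diagonal: "inv_metric g y = (\<lambda>a c. if a = c \<and> a < 4 then 1 / G a else 0)"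
proof -
  have contract: "(\<Sum>j<4. g y a j * h j c) = G a * h a c"
    if "a < 4" for a c and h :: "nat \<Rightarrow> nat \<Rightarrow> real"
    using that by (simp add: diagonal if_distrib[of "\<lambda>z. z * w" for w] sum.delta cong: if_cong)
  show ?thesis
    unfolding inv_metric_def
  proof (rule the_equality)
    fix h assume h: "(\<forall>a<4. \<forall>c<4. (\<Sum>j<4. g y a j * h j c) = (if a = c then 1 else 0))
      \<and> (\<forall>a c. 4 \<le> a \<or> 4 \<le> c \<longrightarrow> h a c = 0)"
    show "h = (\<lambda>a c. if a = c \<and> a < 4 then 1 / G a else 0)"
    proof (intro ext)
      fix a c
      show "h a c = (if a = c \<and> a < 4 then 1 / G a else 0)"
      proof (cases "a < 4 \<and> c < 4")
        case True
        then have "G a * h a c = (if a = c then 1 else 0)" using h contract by auto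
        then show ?thesis using nonzero[of a] True by (auto simp: field_simps)
      next
        case False then show ?thesis using h by auto
      qed
    qed
  qed (use nonzero in \<open>auto simp: diagonal if_distrib[of "\<lambda>z. z * w" for w] sum.delta cong: if_cong\<close>)
qed

lemma christoffel_diagonal:
  assumes "a < 4"
  shows "christoffel g y a b c
    = (pd b (\<lambda>y. g y a c) y + pd c (\<lambda>y. g y a b) y - pd a (\<lambda>y. g y b c) y) / (2 * G a)"
  using assms unfolding christoffel_def inv_metric_diagonal
  by (simp add: if_distrib[of "\<lambda>z. z * w" for w] sum.delta' field_simps cong: if_cong)

lemma scalar_curv_diagonal: "scalar_curv g y = (\<Sum>a<4. ricci g y a a / G a)"
  unfolding scalar_curv_def inv_metric_diagonal
  by (simp add: if_distrib[of "\<lambda>z. z * w" for w] sum.delta' cong: if_cong)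

end

lemma smooth_on_has_real_derivative:
  assumes "smooth_on I h" "r \<in> I"
  shows "(h has_real_derivative deriv h r) (at r)"
  using assms unfolding smooth_on_def
  by (metis DERIV_deriv_iff_real_differentiable funpow_0)

lemma smooth_on_deriv: "smooth_on I h \<Longrightarrow> smooth_on I (deriv h)"
  unfolding smooth_on_def by (metis funpow_Suc_right o_apply)

lemma sss_metric_diagonal: "sss_metric b f1 f2 y a c = (if a = c then sss_metric b f1 f2 y a a else 0)"
  by (simp add: sss_metric_def)

lemma sum_lessThan_4: "(\<Sum>a<(4::nat). h a) = h 0 + h 1 + h 2 + (h 3 :: real)"
  by (simp add: eval_nat_numeral)

lemma less_4_cases: "i < (4::nat) \<Longrightarrow> i = 0 \<or> i = 1 \<or> i = 2 \<or> i = 3"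
  by auto

lemma all_less_4: "(\<forall>k<(4::nat). P k) \<longleftrightarrow> P 0 \<and> P 1 \<and> P 2 \<and> P 3"
  by (auto dest: less_4_cases)

lemma diff_half_mult_eq_iff_divide:
  fixes R S T c :: real
  assumes "c \<noteq> 0"
  shows "R - 1/2 * S * c = T \<longleftrightarrow> R / c - 1/2 * S = T / c"
proof -
  have "R / c - 1/2 * S = (R - 1/2 * S * c) / c"
    using assms by (simp add: field_simps)
  then show ?thesis
    using assms by simp
qed

lemma has_real_derivative_if:
  "(P \<Longrightarrow> (f has_real_derivative a) (at x)) \<Longrightarrow> (\<not> P \<Longrightarrow> (h has_real_derivative c) (at x))
   \<Longrightarrow> ((\<lambda>s. if P then f s else h s) has_real_derivative (if P then a else c)) (at x)"
  by (cases P) auto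

locale static_spherical =
  fixes b f1 f2 :: "real \<Rightarrow> real" and I :: "real set"
  assumes open_I: "open I"
    and smooth_b: "smooth_on I b" and smooth_f1: "smooth_on I f1" and smooth_f2: "smooth_on I f2"
    and b_pos: "\<And>r. r \<in> I \<Longrightarrow> b r > 0"
    and f1_pos: "\<And>r. r \<in> I \<Longrightarrow> f1 r > 0"
    and f2_pos: "\<And>r. r \<in> I \<Longrightarrow> f2 r > 0"
begin

abbreviation g :: metric where "g \<equiv> sss_metric b f1 f2"

definition in_chart :: "(nat \<Rightarrow> real) \<Rightarrow> bool" where
  "in_chart y \<longleftrightarrow> y 1 \<in> I \<and> 0 < y 2 \<and> y 2 < pi"

lemma in_chart_nonzero:
  assumes "in_chart y"
  shows "b (y 1) \<noteq> 0" "f1 (y 1) \<noteq> 0" "f2 (y 1) \<noteq> 0" "sin (y 2) \<noteq> 0"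
  using assms b_pos f1_pos f2_pos sin_gt_zero unfolding in_chart_def by force+

lemma sss_metric_nonzero: "in_chart y \<Longrightarrow> a < 4 \<Longrightarrow> g y a a \<noteq> 0"
  using in_chart_nonzero[of y] by (auto simp: sss_metric_def eval_nat_numeral less_Suc_eq)

lemma has_real_derivative_coefficients:
  assumes "r \<in> I"
  shows "(b has_real_derivative deriv b r) (at r)" "(f1 has_real_derivative deriv f1 r) (at r)"
    "(f2 has_real_derivative deriv f2 r) (at r)"
    "(deriv b has_real_derivative deriv (deriv b) r) (at r)"
    "(deriv f1 has_real_derivative deriv (deriv f1) r) (at r)"
    "(deriv f2 has_real_derivative deriv (deriv f2) r) (at r)"
  using assms smooth_b smooth_f1 smooth_f2
  by (auto intro: smooth_on_has_real_derivative smooth_on_deriv)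

definition dmetric :: "nat \<Rightarrow> nat \<Rightarrow> real \<Rightarrow> real \<Rightarrow> real" where
  "dmetric i a r \<theta> =
    (if i = 1 then
       (if a = 0 then - 2 * b r * deriv b r else if a = 1 then 2 * f1 r * deriv f1 r
        else if a = 2 then 2 * f2 r * deriv f2 r else if a = 3 then 2 * f2 r * deriv f2 r * (sin \<theta>)^2
        else 0)
     else if i = 2 \<and> a = 3 then 2 * (f2 r)^2 * sin \<theta> * cos \<theta> else 0)"

lemma pd_sss_metric:
  assumes "in_chart y"
  shows "pd i (\<lambda>y. g y a c) y = (if a = c then dmetric i a (y 1) (y 2) else 0)"
proof -
  have r: "y 1 \<in> I" using assms in_chart_def by auto
  note derivs = has_real_derivative_coefficients[OF r]
  consider "a = c" "i = 1" | "a = c" "i = 2" | "i \<noteq> 1" "i \<noteq> 2" | "a \<noteq> c" by blast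
  then show ?thesis
  proof cases
    case 1
    have "((\<lambda>s. g (y(1 := s)) a a) has_real_derivative dmetric 1 a (y 1) (y 2)) (at (y 1))"
      using derivs by (cases "a = 0"; cases "a = 1"; cases "a = 2"; cases "a = 3")
        (auto simp: sss_metric_def dmetric_def intro!: derivative_eq_intros)
    from pd_eq_if_has_derivative[OF this] show ?thesis using 1 by simp
  next
    case 2
    have "((\<lambda>s. g (y(2 := s)) a a) has_real_derivative dmetric 2 a (y 1) (y 2)) (at (y 2))"
      by (cases "a = 3") (auto simp: sss_metric_def dmetric_def intro!: derivative_eq_intros cong: if_cong)
    from pd_eq_if_has_derivative[OF this] show ?thesis using 2 by simp
  next
    case 3
    then have "g (y(i := s)) a c = g y a c" for s
      by (simp add: sss_metric_def)
    then show ?thesis using 3 by (auto intro: pd_eq_0_if_const simp: dmetric_def)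
  qed (auto intro: pd_eq_0_if_const simp: sss_metric_def)
qed

definition Gamma :: "real \<Rightarrow> real \<Rightarrow> nat \<Rightarrow> nat \<Rightarrow> nat \<Rightarrow> real" where
  "Gamma r \<theta> i j k =
    (if i = 0 \<and> (j = 0 \<and> k = 1 \<or> j = 1 \<and> k = 0) then deriv b r / b r
     else if i = 1 \<and> j = 0 \<and> k = 0 then b r * deriv b r / (f1 r)^2
     else if i = 1 \<and> j = 1 \<and> k = 1 then deriv f1 r / f1 r
     else if i = 1 \<and> j = 2 \<and> k = 2 then - f2 r * deriv f2 r / (f1 r)^2
     else if i = 1 \<and> j = 3 \<and> k = 3 then - f2 r * deriv f2 r * (sin \<theta>)^2 / (f1 r)^2
     else if i = 2 \<and> (j = 1 \<and> k = 2 \<or> j = 2 \<and> k = 1) then deriv f2 r / f2 r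
     else if i = 2 \<and> j = 3 \<and> k = 3 then - sin \<theta> * cos \<theta>
     else if i = 3 \<and> (j = 1 \<and> k = 3 \<or> j = 3 \<and> k = 1) then deriv f2 r / f2 r
     else if i = 3 \<and> (j = 2 \<and> k = 3 \<or> j = 3 \<and> k = 2) then cos \<theta> / sin \<theta>
     else 0)"

lemma Gamma_eq_metric_derivatives:
  assumes "in_chart y" "i < 4" "j < 4" "k < 4"
  shows "((if i = k then dmetric j i (y 1) (y 2) else 0) + (if i = j then dmetric k i (y 1) (y 2) else 0)
      - (if j = k then dmetric i j (y 1) (y 2) else 0)) / (2 * g y i i) = Gamma (y 1) (y 2) i j k"
  using in_chart_nonzero[OF assms(1)] less_4_cases[OF assms(2)] less_4_cases[OF assms(3)]
    less_4_cases[OF assms(4)]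
  by (auto simp: sss_metric_def dmetric_def Gamma_def field_simps power2_eq_square)

lemma christoffel_sss_metric:
  assumes "in_chart y" "i < 4" "j < 4" "k < 4"
  shows "christoffel g y i j k = Gamma (y 1) (y 2) i j k"
proof -
  have "christoffel g y i j k = (pd j (\<lambda>y. g y i k) y + pd k (\<lambda>y. g y i j) y - pd i (\<lambda>y. g y j k) y)
      / (2 * g y i i)"
    by (rule christoffel_diagonal[where G = "\<lambda>a. g y a a"])
      (fact sss_metric_diagonal sss_metric_nonzero[OF assms(1)] assms(2))+
  also have "\<dots> = Gamma (y 1) (y 2) i j k"
    unfolding pd_sss_metric[OF assms(1)] by (rule Gamma_eq_metric_derivatives[OF assms])
  finally show ?thesis .
qed

(* The two derivative tables repeat the branch structure of Gamma literally, so that their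
   derivative property follows branch by branch from has_real_derivative_if. *)

definition dGamma_dr :: "real \<Rightarrow> real \<Rightarrow> nat \<Rightarrow> nat \<Rightarrow> nat \<Rightarrow> real" where
  "dGamma_dr r \<theta> i j k =
    (if i = 0 \<and> (j = 0 \<and> k = 1 \<or> j = 1 \<and> k = 0) then (deriv (deriv b) r * b r - (deriv b r)^2) / (b r)^2
     else if i = 1 \<and> j = 0 \<and> k = 0 then ((deriv b r)^2 + b r * deriv (deriv b) r) / (f1 r)^2
       - 2 * b r * deriv b r * deriv f1 r / (f1 r)^3
     else if i = 1 \<and> j = 1 \<and> k = 1 then (deriv (deriv f1) r * f1 r - (deriv f1 r)^2) / (f1 r)^2
     else if i = 1 \<and> j = 2 \<and> k = 2 then - ((deriv f2 r)^2 + f2 r * deriv (deriv f2) r) / (f1 r)^2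
       + 2 * f2 r * deriv f2 r * deriv f1 r / (f1 r)^3
     else if i = 1 \<and> j = 3 \<and> k = 3 then (- ((deriv f2 r)^2 + f2 r * deriv (deriv f2) r) / (f1 r)^2
       + 2 * f2 r * deriv f2 r * deriv f1 r / (f1 r)^3) * (sin \<theta>)^2
     else if i = 2 \<and> (j = 1 \<and> k = 2 \<or> j = 2 \<and> k = 1)
       then (deriv (deriv f2) r * f2 r - (deriv f2 r)^2) / (f2 r)^2
     else if i = 2 \<and> j = 3 \<and> k = 3 then 0
     else if i = 3 \<and> (j = 1 \<and> k = 3 \<or> j = 3 \<and> k = 1)
       then (deriv (deriv f2) r * f2 r - (deriv f2 r)^2) / (f2 r)^2
     else 0)"

definition dGamma_dtheta :: "real \<Rightarrow> real \<Rightarrow> nat \<Rightarrow> nat \<Rightarrow> nat \<Rightarrow> real" where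
  "dGamma_dtheta r \<theta> i j k =
    (if i = 0 \<and> (j = 0 \<and> k = 1 \<or> j = 1 \<and> k = 0) then 0
     else if i = 1 \<and> j = 0 \<and> k = 0 then 0
     else if i = 1 \<and> j = 1 \<and> k = 1 then 0
     else if i = 1 \<and> j = 2 \<and> k = 2 then 0
     else if i = 1 \<and> j = 3 \<and> k = 3 then - 2 * f2 r * deriv f2 r * sin \<theta> * cos \<theta> / (f1 r)^2
     else if i = 2 \<and> (j = 1 \<and> k = 2 \<or> j = 2 \<and> k = 1) then 0
     else if i = 2 \<and> j = 3 \<and> k = 3 then (sin \<theta>)^2 - (cos \<theta>)^2
     else if i = 3 \<and> (j = 1 \<and> k = 3 \<or> j = 3 \<and> k = 1) then 0
     else if i = 3 \<and> (j = 2 \<and> k = 3 \<or> j = 3 \<and> k = 2) then - 1 / (sin \<theta>)^2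
     else 0)"

lemma has_real_derivative_Gamma_r:
  assumes "r \<in> I"
  shows "((\<lambda>s. Gamma s \<theta> i j k) has_real_derivative dGamma_dr r \<theta> i j k) (at r)"
  using b_pos[OF assms] f1_pos[OF assms] f2_pos[OF assms] has_real_derivative_coefficients[OF assms]
  unfolding Gamma_def dGamma_dr_def
  by (intro has_real_derivative_if)
    (auto intro!: derivative_eq_intros simp: field_simps power2_eq_square power3_eq_cube)

lemma has_real_derivative_Gamma_theta:
  assumes "r \<in> I" "sin \<theta> \<noteq> 0"
  shows "((\<lambda>s. Gamma r s i j k) has_real_derivative dGamma_dtheta r \<theta> i j k) (at \<theta>)"
proof -
  have cos_sq: "cos \<theta> * cos \<theta> = 1 - sin \<theta> * sin \<theta>"
    using sin_cos_squared_add[of \<theta>] by (simp add: power2_eq_square)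
  show ?thesis
    using f1_pos[OF assms(1)] assms(2) unfolding Gamma_def dGamma_dtheta_def
    by (intro has_real_derivative_if)
      (auto intro!: derivative_eq_intros simp: field_simps power2_eq_square cos_sq)
qed

lemma eventually_in_chart_update:
  assumes "in_chart x"
  shows "eventually (\<lambda>s. in_chart (x(i := s))) (nhds (x i))"
proof -
  consider "i = 1" | "i = 2" | "i \<noteq> 1" "i \<noteq> 2" by blast
  then show ?thesis
  proof cases
    case 1
    have "eventually (\<lambda>s. s \<in> I) (nhds (x 1))"
      using assms open_I eventually_nhds_in_open in_chart_def by blast
    then show ?thesis using assms 1 by (auto elim: eventually_mono simp: in_chart_def)
  next
    case 2
    have "eventually (\<lambda>s. s \<in> {0<..<pi}) (nhds (x 2))"
      using assms eventually_nhds_in_open[of "{0<..<pi}"] in_chart_def by auto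
    then show ?thesis using assms 2 by (auto elim: eventually_mono simp: in_chart_def)
  qed (use assms in \<open>simp add: in_chart_def\<close>)
qed

lemma pd_christoffel_sss_metric:
  assumes "in_chart x" "i < 4" "j < 4" "k < 4"
  shows "pd m (\<lambda>y. christoffel g y i j k) x
    = (if m = 1 then dGamma_dr (x 1) (x 2) i j k else if m = 2 then dGamma_dtheta (x 1) (x 2) i j k else 0)"
proof (rule pd_eq_if_eventually)
  show "eventually (\<lambda>s. christoffel g (x(m := s)) i j k = Gamma ((x(m := s)) 1) ((x(m := s)) 2) i j k)
      (nhds (x m))"
    using eventually_in_chart_update[OF assms(1)]
    by (rule eventually_mono) (use christoffel_sss_metric assms in blast)
  have "x 1 \<in> I" "sin (x 2) \<noteq> 0" using assms(1) in_chart_nonzero by (auto simp: in_chart_def)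
  then show "((\<lambda>s. Gamma ((x(m := s)) 1) ((x(m := s)) 2) i j k) has_real_derivative
      (if m = 1 then dGamma_dr (x 1) (x 2) i j k else if m = 2 then dGamma_dtheta (x 1) (x 2) i j k else 0))
      (at (x m))"
    using has_real_derivative_Gamma_r has_real_derivative_Gamma_theta by auto
qed

lemma ricci_sss_metric:
  assumes "in_chart x" "j < 4" "k < 4"
  shows "ricci g x j k =
      dGamma_dr (x 1) (x 2) 1 j k + dGamma_dtheta (x 1) (x 2) 2 j k
    - (\<Sum>a<4. if k = 1 then dGamma_dr (x 1) (x 2) a a j
               else if k = 2 then dGamma_dtheta (x 1) (x 2) a a j else 0)
    + (\<Sum>a<4. \<Sum>d<4. Gamma (x 1) (x 2) a a d * Gamma (x 1) (x 2) d j k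
                     - Gamma (x 1) (x 2) a k d * Gamma (x 1) (x 2) d a j)"
proof -
  have "(\<Sum>a<4. pd a (\<lambda>y. christoffel g y a j k) x)
      = (\<Sum>a<4. if a = 1 then dGamma_dr (x 1) (x 2) a j k
               else if a = 2 then dGamma_dtheta (x 1) (x 2) a j k else 0)"
    using assms by (intro sum.cong) (auto simp: pd_christoffel_sss_metric)
  also have "\<dots> = dGamma_dr (x 1) (x 2) 1 j k + dGamma_dtheta (x 1) (x 2) 2 j k"
    by (simp add: sum.If_cases eval_nat_numeral lessThan_Suc insert_commute)
  finally have divergence_term: "(\<Sum>a<4. pd a (\<lambda>y. christoffel g y a j k) x)
      = dGamma_dr (x 1) (x 2) 1 j k + dGamma_dtheta (x 1) (x 2) 2 j k" .
  have "(\<Sum>a<4. pd k (\<lambda>y. christoffel g y a a j) x)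
      = (\<Sum>a<4. if k = 1 then dGamma_dr (x 1) (x 2) a a j
               else if k = 2 then dGamma_dtheta (x 1) (x 2) a a j else 0)"
    and "(\<Sum>a<4. \<Sum>d<4. christoffel g x a a d * christoffel g x d j k
                     - christoffel g x a k d * christoffel g x d a j)
      = (\<Sum>a<4. \<Sum>d<4. Gamma (x 1) (x 2) a a d * Gamma (x 1) (x 2) d j k
                     - Gamma (x 1) (x 2) a k d * Gamma (x 1) (x 2) d a j)"
    using assms by (auto intro!: sum.cong simp: pd_christoffel_sss_metric christoffel_sss_metric)
  with divergence_term show ?thesis
    unfolding ricci_def by simp
qed

lemma ricci_sss_metric_tt:
  assumes "in_chart x"
  shows "ricci g x 0 0 = (b (x 1))^2 * D_fun b f1 f2 (x 1)"
  using in_chart_nonzero[OF assms] unfolding D_fun_def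
  by (subst ricci_sss_metric[OF assms])
    (simp_all add: sum_lessThan_4 dGamma_dr_def dGamma_dtheta_def Gamma_def field_simps
      power2_eq_square power3_eq_cube)

lemma ricci_sss_metric_rr:
  assumes "in_chart x"
  defines "r \<equiv> x 1"
  shows "ricci g x 1 1 = - deriv (deriv b) r / b r + deriv b r * deriv f1 r / (b r * f1 r)
    - 2 * deriv (deriv f2) r / f2 r + 2 * deriv f1 r * deriv f2 r / (f1 r * f2 r)"
  using in_chart_nonzero[OF assms(1)] unfolding r_def
  by (subst ricci_sss_metric[OF assms(1)])
    (simp_all add: sum_lessThan_4 dGamma_dr_def dGamma_dtheta_def Gamma_def field_simps
      power2_eq_square power3_eq_cube)

lemma ricci_sss_metric_theta_theta:
  assumes "in_chart x"
  defines "r \<equiv> x 1"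
  shows "ricci g x 2 2 = 1 - (f2 r * deriv (deriv f2) r + f2 r * deriv f2 r * deriv b r / b r
    - f2 r * deriv f2 r * deriv f1 r / f1 r + (deriv f2 r)^2) / (f1 r)^2"
proof -
  have cos_sq: "cos (x 2) * cos (x 2) = 1 - sin (x 2) * sin (x 2)"
    using sin_cos_squared_add[of "x 2"] by (simp add: power2_eq_square)
  show ?thesis
    using in_chart_nonzero[OF assms(1)] unfolding r_def
    by (subst ricci_sss_metric[OF assms(1)])
      (simp_all add: sum_lessThan_4 dGamma_dr_def dGamma_dtheta_def Gamma_def field_simps
        power2_eq_square power3_eq_cube cos_sq)
qed

lemma ricci_sss_metric_phi_phi:
  assumes "in_chart x"
  shows "ricci g x 3 3 = (sin (x 2))^2 * ricci g x 2 2"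
proof -
  have cos_sq: "cos (x 2) * cos (x 2) = 1 - sin (x 2) * sin (x 2)"
    using sin_cos_squared_add[of "x 2"] by (simp add: power2_eq_square)
  show ?thesis
    using in_chart_nonzero[OF assms(1)]
    by (simp add: ricci_sss_metric[OF assms(1)] sum_lessThan_4 dGamma_dr_def dGamma_dtheta_def
        Gamma_def field_simps power2_eq_square power3_eq_cube cos_sq)
qed

lemma ricci_sss_metric_off_diagonal:
  assumes "in_chart x" "j < 4" "k < 4" "j \<noteq> k"
  shows "ricci g x j k = 0"
  using in_chart_nonzero[OF assms(1)] less_4_cases[OF assms(2)] less_4_cases[OF assms(3)] assms(4)
  by (auto simp: ricci_sss_metric[OF assms(1-3)] sum_lessThan_4 dGamma_dr_def dGamma_dtheta_def
      Gamma_def field_simps power2_eq_square)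

lemma scalar_curv_sss_metric:
  assumes "in_chart x"
  shows "scalar_curv g x
    = - D_fun b f1 f2 (x 1) + ricci g x 1 1 / (f1 (x 1))^2 + 2 * ricci g x 2 2 / (f2 (x 1))^2"
proof -
  have "scalar_curv g x = (\<Sum>a<4. ricci g x a a / g x a a)"
    by (rule scalar_curv_diagonal) (fact sss_metric_diagonal sss_metric_nonzero[OF assms])+
  then show ?thesis
    using in_chart_nonzero[OF assms]
    by (simp add: sum_lessThan_4 ricci_sss_metric_tt[OF assms] ricci_sss_metric_phi_phi[OF assms]
        sss_metric_def field_simps)
qed

lemma Rstar_fun_eq_ricci:
  assumes "in_chart x"
  shows "Rstar_fun f1 f2 (x 1)
    = D_fun b f1 f2 (x 1) + ricci g x 1 1 / (f1 (x 1))^2 + 2 * ricci g x 2 2 / (f2 (x 1))^2"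
  using in_chart_nonzero[OF assms]
  unfolding ricci_sss_metric_rr[OF assms] ricci_sss_metric_theta_theta[OF assms] Rstar_fun_def D_fun_def
  by (simp add: field_simps power2_eq_square)

lemma Sigma_fun_eq_ricci:
  assumes "in_chart x"
  shows "Sigma_fun b f1 f2 (x 1) = ricci g x 1 1 / (f1 (x 1))^2 - ricci g x 2 2 / (f2 (x 1))^2"
  using in_chart_nonzero[OF assms]
  unfolding ricci_sss_metric_rr[OF assms] ricci_sss_metric_theta_theta[OF assms] Sigma_fun_def
  by (simp add: field_simps power2_eq_square)

lemma field_equations_sss_iff:
  assumes "in_chart x"
  shows "(\<forall>k<4. \<forall>l<4. ricci g x k l - 1/2 * scalar_curv g x * g x k l
            = A * u_vec b x k * u_vec b x l + P * g x k l + Q * chi_vec f1 x k * chi_vec f1 x l)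
    \<longleftrightarrow> - D_fun b f1 f2 (x 1) - 1/2 * scalar_curv g x = P - A
      \<and> ricci g x 1 1 / (f1 (x 1))^2 - 1/2 * scalar_curv g x = P + Q
      \<and> ricci g x 2 2 / (f2 (x 1))^2 - 1/2 * scalar_curv g x = P"
    (is "(\<forall>k<4. \<forall>l<4. ricci g x k l - 1/2 * ?S * g x k l = ?T k l) \<longleftrightarrow> ?rhs")
proof -
  note nonzero = in_chart_nonzero[OF assms]
  have "?T k l = 0" "ricci g x k l = 0" "g x k l = 0" if "k < 4" "l < 4" "k \<noteq> l" for k l
    using that ricci_sss_metric_off_diagonal[OF assms]
    by (simp_all add: sss_metric_def u_vec_def chi_vec_def)
  then have "(\<forall>k<4. \<forall>l<4. ricci g x k l - 1/2 * ?S * g x k l = ?T k l)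
      \<longleftrightarrow> (\<forall>k<4. ricci g x k k - 1/2 * ?S * g x k k = ?T k k)"
    by (metis diff_zero mult_zero_right)
  also have "\<dots> \<longleftrightarrow> (\<forall>k<4. ricci g x k k / g x k k - 1/2 * ?S = ?T k k / g x k k)"
    using diff_half_mult_eq_iff_divide[OF sss_metric_nonzero[OF assms]] by blast
  also have "\<dots> \<longleftrightarrow> ?rhs"
  proof -
    have "ricci g x 0 0 / g x 0 0 = - D_fun b f1 f2 (x 1)"
      and "ricci g x 3 3 / g x 3 3 = ricci g x 2 2 / g x 2 2"
      and "?T 0 0 / g x 0 0 = P - A" "?T 1 1 / g x 1 1 = P + Q"
      and "?T 2 2 / g x 2 2 = P" "?T 3 3 / g x 3 3 = P"
      using nonzero by (simp_all add: ricci_sss_metric_tt[OF assms] ricci_sss_metric_phi_phi[OF assms]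
          sss_metric_def u_vec_def chi_vec_def field_simps power2_eq_square)
    then show ?thesis
      unfolding all_less_4 by (simp add: sss_metric_def)
  qed
  finally show ?thesis .
qed

end

theorem proposition3:
  fixes b f1 f2 mu pr pp :: "real \<Rightarrow> real" and \<kappa>1 \<kappa>2 \<kappa>3 :: real
    and I :: "real set" and x :: "nat \<Rightarrow> real"
  assumes "open I"
    and "smooth_on I b" and "smooth_on I f1" and "smooth_on I f2"
    and "\<forall>r\<in>I. b r > 0" and "\<forall>r\<in>I. f1 r > 0" and "\<forall>r\<in>I. f2 r > 0"
    and "x 1 \<in> I" and "0 < x 2" and "x 2 < pi"
  shows "(\<forall>k<4. \<forall>l<4.
            ricci (sss_metric b f1 f2) x k l
              - 1/2 * scalar_curv (sss_metric b f1 f2) x * sss_metric b f1 f2 x k l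
            = ((mu (x 1) + pp (x 1)) * u_vec b x k * u_vec b x l + pp (x 1) * sss_metric b f1 f2 x k l
                 + (pr (x 1) - pp (x 1)) * chi_vec f1 x k * chi_vec f1 x l)
              + ((\<kappa>2 * (f2 (x 1))^2 - 2 * \<kappa>3 * (b (x 1))^2) * u_vec b x k * u_vec b x l
                 + (\<kappa>1 + 2 * \<kappa>2 * (f2 (x 1))^2 + \<kappa>3 * (b (x 1))^2) * sss_metric b f1 f2 x k l
                 - \<kappa>2 * (f2 (x 1))^2 * chi_vec f1 x k * chi_vec f1 x l))
         \<longleftrightarrow>
         (1/2 * Rstar_fun f1 f2 (x 1) = mu (x 1) - 3 * \<kappa>3 * (b (x 1))^2 - \<kappa>2 * (f2 (x 1))^2 - \<kappa>1
          \<and> D_fun b f1 f2 (x 1) = 3/2 * ((pr (x 1) + 2 * pp (x 1)) / 3) + 1/2 * mu (x 1)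
                                   + 2 * \<kappa>2 * (f2 (x 1))^2 + \<kappa>1
          \<and> Sigma_fun b f1 f2 (x 1) = (pr (x 1) - pp (x 1)) - \<kappa>2 * (f2 (x 1))^2)"
proof -
  interpret static_spherical b f1 f2 I
    using assms(1-7) by unfold_locales auto
  have x: "in_chart x"
    using assms(8-10) by (simp add: in_chart_def)
  have fluid_sum: "\<And>A B C A' B' C' u v h c d :: real.
      (A * u * v + B * h + C * c * d) + (A' * u * v + B' * h - C' * c * d)
      = (A + A') * u * v + (B + B') * h + (C - C') * c * d"
    by algebra
  show ?thesis
    unfolding fluid_sum field_equations_sss_iff[OF x]
    unfolding scalar_curv_sss_metric[OF x] Rstar_fun_eq_ricci[OF x] Sigma_fun_eq_ricci[OF x]
    by argo
qed

end
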